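(* Let $k \geq 2$ and let $\Sigma_k$ be an alphabet with $k$ letters. For $n \ge 0$ let $p_k(n)$ be the number of palstars of length $2n$ over $\Sigma_k$ and $u_k(n)$ the number of unbordered strings of length $n$ over $\Sigma_k$, and define the formal power series $P_k(X) = \sum_{n \geq 0} p_k(n) X^n$ and $U_k(X) = \sum_{n\geq 0} u_k(n) X^n$. Then $$P_k(X) = \frac{1}{2 - U_k(X)}.$$
   Context: Let $P = \{ x x^R : x \in \Sigma_k^+\}$ be the set of nonempty even-length palindromes over $\Sigma_k$ (here $x^R$ is the reversal of $x$). A palstar is an element of $P^* = \bigcup_{i\ge 0} P^i$, i.e. a (possibly empty) concatenation of nonempty even-length palindromes; the empty string is a palstar, so $p_k(0)=1$. A nonempty string $x$ is a border of a string $y$ if $x \neq y$ and $x$ is both a prefix and a suffix of $y$; $y$ is unbordered if it has no border (so the empty string is unbordered and $u_k(0)=1$). *)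

theory Defs
  imports "HOL-Library.Sublist" "HOL-Computational_Algebra.Formal_Power_Series"
begin

inductive palstar :: "'a list \<Rightarrow> bool" where
  palstar_Nil: "palstar []"
| palstar_step: "x \<noteq> [] \<Longrightarrow> palstar w \<Longrightarrow> palstar (x @ rev x @ w)"

definition border :: "'a list \<Rightarrow> 'a list \<Rightarrow> bool" where
  "border x y \<longleftrightarrow> x \<noteq> [] \<and> x \<noteq> y \<and> prefix x y \<and> suffix x y"

definition unbordered :: "'a list \<Rightarrow> bool" where
  "unbordered y \<longleftrightarrow> \<not> (\<exists>x. border x y)"

definition pal_count :: "'a set \<Rightarrow> nat \<Rightarrow> nat" where
  "pal_count A n = card {w \<in> lists A. length w = 2 * n \<and> palstar w}"

definition unb_count :: "'a set \<Rightarrow> nat \<Rightarrow> nat" where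
  "unb_count A n = card {w \<in> lists A. length w = n \<and> unbordered w}"

end

theory Submission
  imports Defs
begin

text \<open>
  Call a nonempty even palindrome prime if no proper prefix of it is a nonempty even palindrome.
  Prime palindromes form a prefix code and every nonempty palstar begins with one, so palstars
  factor uniquely into them: p(n) = sum_{i=1..n} q(i) p(n - i), where q(i) counts the prime
  palindromes of length 2i.

  A word that is not unbordered is b v b for its shortest border b, which is unbordered and
  cannot overlap itself (the overlap would be a border of b); this decomposition is unique.
  Likewise an even palindrome that is not prime is p v p with p its shortest even-palindromic
  prefix, which is prime, and v an even palindrome. Counting the k^n words of length n and the
  k^n even palindromes of length 2n in this way gives the same recursion for u(n) and q(n), so
  q(n) = u(n) for n >= 1, and hence P = 1 + (U - 1) P.
\<close>

definition words :: "'a set \<Rightarrow> nat \<Rightarrow> 'a list set" where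
  "words A n = {w \<in> lists A. length w = n}"

lemma card_words: "finite A \<Longrightarrow> card (words A n) = card A ^ n"
  unfolding words_def lists_eq_set by (simp add: card_lists_length_eq)

lemma finite_words: "finite A \<Longrightarrow> finite (words A n)"
  unfolding words_def lists_eq_set by (simp add: finite_lists_length_eq)

lemma card_words_zero: "card {w \<in> words A 0. P w} = (if P [] then 1 else 0)"
proof -
  have "{w \<in> words A 0. P w} = (if P [] then {[]} else {})"
    by (auto simp: words_def)
  then show ?thesis by simp
qed

lemma unbordered_Nil: "unbordered []"
  by (simp add: unbordered_def border_def)

lemma card_image_Sigma:
  assumes "finite I" "\<And>i. i \<in> I \<Longrightarrow> finite (X i)" "\<And>i. i \<in> I \<Longrightarrow> finite (Y i)"
    and "\<And>i j x y x' y'. \<lbrakk>i \<in> I; j \<in> I; x \<in> X i; y \<in> Y i; x' \<in> X j; y' \<in> Y j; f x y = f x' y'\<rbrakk>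
          \<Longrightarrow> i = j \<and> x = x' \<and> y = y'"
  shows "card ((\<lambda>(i, x, y). f x y) ` (SIGMA i:I. X i \<times> Y i)) = (\<Sum>i\<in>I. card (X i) * card (Y i))"
proof -
  have "inj_on (\<lambda>(i, x, y). f x y) (SIGMA i:I. X i \<times> Y i)"
    using assms(4) by (auto intro!: inj_onI)
  then show ?thesis
    using assms(1-3) by (simp add: card_image card_cartesian_product)
qed

lemma card_Un_image_Sigma:
  assumes "finite M" "finite I" "\<And>i. i \<in> I \<Longrightarrow> finite (X i)" "\<And>i. i \<in> I \<Longrightarrow> finite (Y i)"
    and "\<And>i j x y x' y'. \<lbrakk>i \<in> I; j \<in> I; x \<in> X i; y \<in> Y i; x' \<in> X j; y' \<in> Y j; f x y = f x' y'\<rbrakk>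
          \<Longrightarrow> i = j \<and> x = x' \<and> y = y'"
    and "\<And>i x y. \<lbrakk>i \<in> I; x \<in> X i; y \<in> Y i\<rbrakk> \<Longrightarrow> f x y \<notin> M"
  shows "card (M \<union> (\<lambda>(i, x, y). f x y) ` (SIGMA i:I. X i \<times> Y i))
    = card M + (\<Sum>i\<in>I. card (X i) * card (Y i))"
proof -
  have "M \<inter> (\<lambda>(i, x, y). f x y) ` (SIGMA i:I. X i \<times> Y i) = {}"
    using assms(6) by auto
  moreover have "finite ((\<lambda>(i, x, y). f x y) ` (SIGMA i:I. X i \<times> Y i))"
    using assms(2-4) by (intro finite_imageI finite_SigmaI finite_cartesian_product)
  ultimately show ?thesis
    using assms(1) card_image_Sigma[OF assms(2-5)] by (simp add: card_Un_disjoint)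
qed

lemma prefix_suffix_sandwich:
  assumes "prefix b w" "suffix b w" "2 * length b \<le> length w"
  shows "\<exists>v. w = b @ v @ b"
proof -
  obtain s t where w: "w = b @ s" "w = t @ b"
    using assms(1,2) by (meson prefixE suffixE)
  have "length b \<le> length t" using assms(3) w(2) by simp
  then have "t = b @ drop (length b) t"
    using w by (metis append_eq_append_conv_if append_take_drop_id)
  then show ?thesis using w(2) by (metis append_assoc)
qed

lemma prefix_suffix_overlap:
  assumes "prefix b w" "suffix b w" "length w < 2 * length b"
  shows "\<exists>r. prefix r b \<and> suffix r b \<and> length r = 2 * length b - length w"
proof -
  obtain s t where w: "w = b @ s" "w = t @ b"
    using assms(1,2) by (meson prefixE suffixE)
  have "length w = length t + length b" using w(2) by simp
  moreover have "length w = length b + length s" using w(1) by simp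
  ultimately have lengths: "length w = length b + length t" "length t < length b"
    using assms(3) by simp_all
  moreover have "t @ b = b @ s" using w by simp
  ultimately have t: "t = take (length t) b" and s: "b = drop (length t) b @ s"
    by (simp_all add: append_eq_append_conv_if)
  have "b = t @ drop (length t) b"
    using t by (metis append_take_drop_id)
  with s show ?thesis
    using lengths by (intro exI[of _ "drop (length t) b"]) (auto simp: prefix_def suffix_def)
qed

lemma border_length_less: "border b w \<Longrightarrow> length b < length w"
  unfolding border_def by (simp add: prefix_length_less strict_prefix_def)

lemma border_trans:
  assumes "border c b" "border b w"
  shows "border c w"
proof -
  have "length c < length w"
    using assms border_length_less less_trans by blast
  then show ?thesis
    using assms unfolding border_def by (auto intro: prefix_order.trans suffix_order.trans)
qed

lemma bordered_sandwich:
  assumes "\<not> unbordered w"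
  shows "\<exists>b v. b \<noteq> [] \<and> unbordered b \<and> w = b @ v @ b"
proof -
  obtain b where b: "border b w" and shortest: "\<And>c. border c w \<Longrightarrow> length b \<le> length c"
    using assms ex_has_least_nat[of "\<lambda>c. border c w" _ length] unfolding unbordered_def by metis
  have "unbordered b"
    unfolding unbordered_def
    using b border_length_less border_trans shortest leD by blast
  moreover have "2 * length b \<le> length w"
  proof (rule ccontr)
    assume overlap: "\<not> 2 * length b \<le> length w"
    then obtain r where r: "prefix r b" "suffix r b" "length r = 2 * length b - length w"
      using b prefix_suffix_overlap unfolding border_def by (metis not_le)
    then have "border r b"
      using overlap border_length_less[OF b] unfolding border_def by auto
    with \<open>unbordered b\<close> show False unfolding unbordered_def by blast
  qed
  ultimately show ?thesis using b prefix_suffix_sandwich unfolding border_def by blast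
qed

lemma unbordered_sandwich_unique:
  assumes "unbordered b" "unbordered c" "b \<noteq> []" "c \<noteq> []" "b @ v @ b = c @ v' @ c"
  shows "b = c"
proof -
  have "border b c" if "length b < length c" "b \<noteq> []" "b @ v @ b = c @ v' @ c"
    for b c v v' :: "'a list"
  proof -
    have "prefix b (c @ v' @ c)" "suffix b (c @ v' @ c)"
      using that(3) by (metis prefixI, metis suffixI append_assoc)
    moreover have "prefix c (c @ v' @ c)" "suffix c (c @ v' @ c)"
      by (auto simp: suffix_def)
    ultimately have "prefix b c" "suffix b c"
      using that(1) prefix_length_prefix suffix_length_suffix less_imp_le by blast+
    then show ?thesis using that unfolding border_def by auto
  qed
  then have "length b = length c"
    using assms unfolding unbordered_def by (metis linorder_neqE_nat)
  then show ?thesis using assms(5) by simp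
qed

definition even_pal :: "'a list \<Rightarrow> bool" where
  "even_pal w \<longleftrightarrow> w \<noteq> [] \<and> even (length w) \<and> rev w = w"

definition prime_pal :: "'a list \<Rightarrow> bool" where
  "prime_pal w \<longleftrightarrow> even_pal w \<and> \<not> (\<exists>p. even_pal p \<and> strict_prefix p w)"

lemma prime_pal_prefix_unique:
  assumes "prime_pal p" "prime_pal q" "p @ x = q @ y"
  shows "p = q \<and> x = y"
proof -
  have "\<not> strict_prefix p q \<and> \<not> strict_prefix q p"
    using assms(1,2) unfolding prime_pal_def by blast
  moreover have "prefix p q \<or> prefix q p"
    using assms(3) prefix_same_cases[of p "p @ x" q] by (metis prefixI)
  ultimately have "p = q" by (auto simp: strict_prefix_def)
  then show ?thesis using assms(3) by simp
qed

lemma palindromic_border: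
  assumes "rev p = p" "prefix r p" "suffix r p"
  shows "rev r = r"
proof -
  have "prefix (rev r) p" using assms(1,3) by (simp add: suffix_to_prefix)
  then have "prefix (rev r) r" "prefix r (rev r)"
    using prefix_length_prefix assms(2) by fastforce+
  then show ?thesis by (rule prefix_order.antisym)
qed

lemma even_pal_sandwich:
  assumes "even_pal w" "\<not> prime_pal w"
  shows "\<exists>p v. prime_pal p \<and> w = p @ v @ p \<and> rev v = v \<and> even (length v)"
proof -
  obtain p where p: "even_pal p" "strict_prefix p w"
    and shortest: "\<And>q. even_pal q \<Longrightarrow> strict_prefix q w \<Longrightarrow> length p \<le> length q"
    using assms ex_has_least_nat[of "\<lambda>q. even_pal q \<and> strict_prefix q w" _ length]
    unfolding prime_pal_def by blast
  have "prime_pal p"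
  proof -
    have "length p \<le> length q" if "even_pal q" "strict_prefix q p" for q
      using that p(2) shortest prefix_order.less_trans by blast
    then show ?thesis
      using p(1) prefix_length_less leD unfolding prime_pal_def by blast
  qed
  have w: "rev w = w" "even (length w)" and pal_p: "rev p = p" "even (length p)"
    using assms(1) p(1) unfolding even_pal_def by auto
  have prefix: "prefix p w" using p(2) by (simp add: strict_prefix_def)
  then have suffix: "suffix p w" using w(1) pal_p(1) by (simp add: suffix_to_prefix)
  have "2 * length p \<le> length w"
  proof (rule ccontr)
    assume overlap: "\<not> 2 * length p \<le> length w"
    then obtain r where r: "prefix r p" "suffix r p" "length r = 2 * length p - length w"
      using prefix_suffix_overlap[OF prefix suffix] by (meson not_le)
    have "rev r = r" using palindromic_border pal_p(1) r(1,2) by blast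
    moreover have "r \<noteq> []" using r(3) overlap by auto
    moreover have "even (length r)" using r(3) w(2) overlap by auto
    ultimately have "even_pal r" unfolding even_pal_def by blast
    moreover have "strict_prefix r p"
      using r(1,3) overlap prefix_length_less[OF p(2)] by (auto simp: strict_prefix_def)
    ultimately show False using \<open>prime_pal p\<close> unfolding prime_pal_def by blast
  qed
  then obtain v where v: "w = p @ v @ p"
    using prefix_suffix_sandwich prefix suffix by blast
  then have "rev v = v" using w(1) pal_p(1) by simp
  moreover have "even (length v)" using v w(2) pal_p(2) by simp
  ultimately show ?thesis using \<open>prime_pal p\<close> v by blast
qed

lemma words_unbordered_sandwich_split:
  "words A n = {w \<in> words A n. unbordered w}
    \<union> (\<lambda>(i, b, v). b @ v @ b) ` (SIGMA i:{1..n div 2}. {b \<in> words A i. unbordered b} \<times> words A (n - 2 * i))"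
  (is "_ = ?U \<union> (\<lambda>(i, b, v). b @ v @ b) ` ?Sigma")
proof (intro equalityI subsetI)
  fix w assume w: "w \<in> words A n"
  show "w \<in> ?U \<union> (\<lambda>(i, b, v). b @ v @ b) ` ?Sigma"
  proof (cases "unbordered w")
    case False
    then obtain b v where bv: "b \<noteq> []" "unbordered b" "w = b @ v @ b"
      using bordered_sandwich by blast
    then have "(length b, b, v) \<in> ?Sigma"
      using w by (auto simp: words_def Suc_le_eq)
    then show ?thesis using bv(3) by (intro UnI2 image_eqI[where x = "(length b, b, v)"]) simp_all
  qed (use w in simp)
qed (auto simp: words_def)

lemma card_words_unbordered_sandwiches:
  assumes "finite A"
  shows "card A ^ n = card {w \<in> words A n. unbordered w}
    + (\<Sum>i = 1..n div 2. card {b \<in> words A i. unbordered b} * card A ^ (n - 2 * i))"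
proof -
  let ?U = "\<lambda>i. {b \<in> words A i. unbordered b}"
  let ?S = "(\<lambda>(i, b, v). b @ v @ b) ` (SIGMA i:{1..n div 2}. ?U i \<times> words A (n - 2 * i))"
  have "card A ^ n = card (words A n)" using assms by (simp add: card_words)
  also have "\<dots> = card (?U n \<union> ?S)" using words_unbordered_sandwich_split by (rule arg_cong)
  also have "\<dots> = card (?U n) + (\<Sum>i = 1..n div 2. card (?U i) * card (words A (n - 2 * i)))"
  proof (rule card_Un_image_Sigma)
    fix i j b v c v'
    assume "i \<in> {1..n div 2}" "j \<in> {1..n div 2}" "b \<in> ?U i" "c \<in> ?U j"
      and eq: "b @ v @ b = c @ v' @ c"
    then have "b \<noteq> []" "c \<noteq> []" "unbordered b" "unbordered c" "length b = i" "length c = j"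
      by (auto simp: words_def)
    moreover from this have "b = c" using unbordered_sandwich_unique eq by blast
    ultimately show "i = j \<and> b = c \<and> v = v'"
      using eq by simp
  next
    fix i b v assume "i \<in> {1..n div 2}" "b \<in> ?U i"
    then have "border b (b @ v @ b)"
      unfolding border_def by (auto simp: words_def prefix_def suffix_def)
    then show "b @ v @ b \<notin> ?U n"
      unfolding unbordered_def by blast
  qed (use assms in \<open>simp_all add: finite_words\<close>)
  finally show ?thesis using assms by (simp add: card_words)
qed

lemma palindrome_halves:
  assumes "rev w = w" "length w = 2 * n"
  shows "w = take n w @ rev (take n w)"
proof -
  have "take n w @ drop n w = rev (drop n w) @ rev (take n w)"
    using assms(1) by (metis append_take_drop_id rev_append)
  moreover have "length (take n w) = length (rev (drop n w))"
    using assms(2) by simp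
  ultimately have "drop n w = rev (take n w)"
    by (metis append_eq_append_conv)
  then show ?thesis by (metis append_take_drop_id)
qed

lemma card_even_palindromes:
  assumes "finite A"
  shows "card {w \<in> words A (2 * n). rev w = w} = card A ^ n"
proof -
  have "{w \<in> words A (2 * n). rev w = w} = (\<lambda>x. x @ rev x) ` words A n"
  proof (intro equalityI subsetI)
    fix w assume w: "w \<in> {w \<in> words A (2 * n). rev w = w}"
    then have "take n w \<in> words A n"
      by (auto simp: words_def dest: in_set_takeD)
    then show "w \<in> (\<lambda>x. x @ rev x) ` words A n"
      using w palindrome_halves[of w n] by (auto simp: words_def intro: rev_image_eqI)
  qed (auto simp: words_def)
  moreover have "inj_on (\<lambda>x. x @ rev x) (words A n)"
    by (rule inj_onI) (simp add: words_def)
  ultimately show ?thesis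
    using assms by (simp add: card_image card_words)
qed

lemma prime_pal_half_length:
  assumes "prime_pal p"
  obtains i where "length p = 2 * i" "i \<ge> 1"
proof -
  obtain i where i: "length p = 2 * i"
    using assms unfolding prime_pal_def even_pal_def by (auto elim: evenE)
  moreover have "p \<noteq> []" using assms unfolding prime_pal_def even_pal_def by simp
  then have "i \<ge> 1" using i by (cases i) auto
  ultimately show ?thesis using that by blast
qed

lemma prime_pal_sandwich_not_prime:
  assumes "prime_pal p"
  shows "\<not> prime_pal (p @ v @ p)"
proof -
  have "even_pal p" "p \<noteq> []" using assms unfolding prime_pal_def even_pal_def by auto
  moreover have "strict_prefix p (p @ v @ p)" using \<open>p \<noteq> []\<close> by (simp add: strict_prefix_def)
  ultimately show ?thesis unfolding prime_pal_def by blast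
qed

lemma even_palindromes_prime_sandwich_split:
  assumes "n \<ge> 1"
  shows "{w \<in> words A (2 * n). rev w = w} = {w \<in> words A (2 * n). prime_pal w}
    \<union> (\<lambda>(i, p, v). p @ v @ p) ` (SIGMA i:{1..n div 2}.
        {p \<in> words A (2 * i). prime_pal p} \<times> {v \<in> words A (2 * (n - 2 * i)). rev v = v})"
  (is "?E n = ?Q n \<union> (\<lambda>(i, p, v). p @ v @ p) ` ?Sigma")
proof (intro equalityI subsetI)
  fix w assume w: "w \<in> ?E n"
  show "w \<in> ?Q n \<union> (\<lambda>(i, p, v). p @ v @ p) ` ?Sigma"
  proof (cases "prime_pal w")
    case False
    have "even_pal w" using w assms by (auto simp: words_def even_pal_def)
    then obtain p v where pv: "prime_pal p" "w = p @ v @ p" "rev v = v" "even (length v)"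
      using False even_pal_sandwich by blast
    obtain i where i: "length p = 2 * i" "i \<ge> 1"
      using prime_pal_half_length[OF pv(1)] .
    have "length w = 2 * n" using w by (simp add: words_def)
    then have "length v = 2 * (n - 2 * i)" "i \<le> n div 2"
      using pv(2) i(1) by simp_all
    then have "(i, p, v) \<in> ?Sigma"
      using w pv i by (auto simp: words_def)
    then show ?thesis using pv(2) by (intro UnI2 image_eqI[where x = "(i, p, v)"]) simp_all
  qed (use w in simp)
next
  fix w assume "w \<in> ?Q n \<union> (\<lambda>(i, p, v). p @ v @ p) ` ?Sigma"
  then consider "w \<in> ?Q n"
    | i p v where "i \<in> {1..n div 2}" "p \<in> ?Q i" "v \<in> ?E (n - 2 * i)" "w = p @ v @ p"
    by (auto simp: image_iff)
  then show "w \<in> ?E n"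
  proof cases
    case 1
    then show ?thesis by (simp add: prime_pal_def even_pal_def)
  next
    case (2 i p v)
    then have "rev p = p" "length p = 2 * i" "2 * i \<le> n" "length v = 2 * (n - 2 * i)"
      by (auto simp: words_def prime_pal_def even_pal_def)
    then show ?thesis using 2 by (simp add: words_def)
  qed
qed

lemma card_even_palindromes_prime_sandwiches:
  assumes "finite A" "n \<ge> 1"
  shows "card A ^ n = card {w \<in> words A (2 * n). prime_pal w}
    + (\<Sum>i = 1..n div 2. card {p \<in> words A (2 * i). prime_pal p} * card A ^ (n - 2 * i))"
proof -
  let ?E = "\<lambda>i. {w \<in> words A (2 * i). rev w = w}"
  let ?Q = "\<lambda>i. {p \<in> words A (2 * i). prime_pal p}"
  let ?S = "(\<lambda>(i, p, v). p @ v @ p) ` (SIGMA i:{1..n div 2}. ?Q i \<times> ?E (n - 2 * i))"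
  have "card A ^ n = card (?E n)" using assms by (simp add: card_even_palindromes)
  also have "\<dots> = card (?Q n \<union> ?S)"
    using even_palindromes_prime_sandwich_split[OF assms(2)] by (rule arg_cong)
  also have "\<dots> = card (?Q n) + (\<Sum>i = 1..n div 2. card (?Q i) * card (?E (n - 2 * i)))"
  proof (rule card_Un_image_Sigma)
    fix i j p v q v'
    assume "p \<in> ?Q i" "q \<in> ?Q j" and eq: "p @ v @ p = q @ v' @ q"
    then have "prime_pal p" "prime_pal q" "length p = 2 * i" "length q = 2 * j"
      by (auto simp: words_def)
    moreover from this have "p = q" using prime_pal_prefix_unique eq by blast
    ultimately show "i = j \<and> p = q \<and> v = v'"
      using eq by simp
  next
    fix i p v assume "p \<in> ?Q i"
    then show "p @ v @ p \<notin> ?Q n" using prime_pal_sandwich_not_prime by blast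
  qed (use assms in \<open>simp_all add: finite_words\<close>)
  finally show ?thesis using assms by (simp add: card_even_palindromes)
qed

lemma palstar_append: "palstar u \<Longrightarrow> palstar v \<Longrightarrow> palstar (u @ v)"
  by (induction u rule: palstar.induct) (auto intro: palstar.intros)

lemma palstar_even_length: "palstar w \<Longrightarrow> even (length w)"
  by (induction w rule: palstar.induct) auto

lemma even_length_palindrome_palstar:
  assumes "rev w = w" "even (length w)"
  shows "palstar w"
proof (cases "w = []")
  case False
  obtain n where n: "length w = 2 * n" using assms(2) by (auto elim: evenE)
  moreover have "n > 0" using n False by (cases n) auto
  ultimately have "w = take n w @ rev (take n w) @ []" "take n w \<noteq> []"
    using palindrome_halves[OF assms(1)] by auto
  then show ?thesis by (metis palstar.intros)
qed (simp add: palstar.palstar_Nil)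

lemma prime_pal_palstar: "prime_pal p \<Longrightarrow> palstar p"
  by (simp add: prime_pal_def even_pal_def even_length_palindrome_palstar)

lemma even_pal_prime_factor:
  assumes "even_pal w"
  shows "\<exists>p r. prime_pal p \<and> w = p @ r \<and> palstar r"
proof (cases "prime_pal w")
  case True
  then show ?thesis by (auto intro: palstar.palstar_Nil)
next
  case False
  then obtain p v where pv: "prime_pal p" "w = p @ v @ p" "rev v = v" "even (length v)"
    using even_pal_sandwich[OF assms] by blast
  then have "palstar (v @ p)"
    using even_length_palindrome_palstar prime_pal_palstar palstar_append by blast
  then show ?thesis using pv(1,2) by blast
qed

lemma nonempty_palstar_prime_factor:
  assumes "palstar w" "w \<noteq> []"
  shows "\<exists>p r. prime_pal p \<and> w = p @ r \<and> palstar r"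
  using assms
proof cases
  case (palstar_step x w')
  then have "even_pal (x @ rev x)" by (simp add: even_pal_def)
  then obtain p r where "prime_pal p" "x @ rev x = p @ r" "palstar r"
    using even_pal_prime_factor by blast
  moreover have "palstar (r @ w')" using \<open>palstar r\<close> palstar_step(3) by (rule palstar_append)
  ultimately show ?thesis using palstar_step(1) by (metis append_assoc)
qed simp

lemma palstars_prime_factor_split:
  assumes "n \<ge> 1"
  shows "{w \<in> words A (2 * n). palstar w} = (\<lambda>(i, p, r). p @ r) ` (SIGMA i:{1..n}.
    {p \<in> words A (2 * i). prime_pal p} \<times> {r \<in> words A (2 * (n - i)). palstar r})"
  (is "?P n = (\<lambda>(i, p, r). p @ r) ` ?Sigma")
proof (intro equalityI subsetI)
  fix w assume w: "w \<in> ?P n"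
  then have "w \<noteq> []" "palstar w" using assms by (auto simp: words_def)
  then obtain p r where pr: "prime_pal p" "w = p @ r" "palstar r"
    using nonempty_palstar_prime_factor by blast
  obtain i where i: "length p = 2 * i" "i \<ge> 1"
    using prime_pal_half_length[OF pr(1)] .
  obtain j where j: "length r = 2 * j"
    using palstar_even_length[OF pr(3)] by (auto elim: evenE)
  have "length w = 2 * n" using w by (simp add: words_def)
  then have "i \<le> n" "j = n - i" using pr(2) i j by simp_all
  then have "(i, p, r) \<in> ?Sigma"
    using w pr i j by (auto simp: words_def)
  then show "w \<in> (\<lambda>(i, p, r). p @ r) ` ?Sigma"
    using pr(2) by (intro image_eqI[where x = "(i, p, r)"]) simp_all
next
  fix w assume "w \<in> (\<lambda>(i, p, r). p @ r) ` ?Sigma"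
  then show "w \<in> ?P n"
    using prime_pal_palstar palstar_append by (auto simp: words_def)
qed

lemma card_palstars_prime_factorizations:
  assumes "finite A" "n \<ge> 1"
  shows "card {w \<in> words A (2 * n). palstar w}
    = (\<Sum>i = 1..n. card {p \<in> words A (2 * i). prime_pal p} * card {w \<in> words A (2 * (n - i)). palstar w})"
  unfolding palstars_prime_factor_split[OF assms(2)]
proof (rule card_image_Sigma)
  fix i j p r q r'
  assume "p \<in> {p \<in> words A (2 * i). prime_pal p}" "q \<in> {p \<in> words A (2 * j). prime_pal p}"
    and eq: "p @ r = q @ r'"
  then have "prime_pal p" "prime_pal q" "length p = 2 * i" "length q = 2 * j"
    by (auto simp: words_def)
  moreover from this have "p = q \<and> r = r'" using prime_pal_prefix_unique eq by blast
  ultimately show "i = j \<and> p = q \<and> r = r'" by simp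
qed (use assms in \<open>simp_all add: finite_words\<close>)

lemma sandwich_recurrence_unique:
  fixes a b :: "nat \<Rightarrow> nat"
  assumes a: "\<And>n. n \<ge> 1 \<Longrightarrow> c ^ n = a n + (\<Sum>i = 1..n div 2. a i * c ^ (n - 2 * i))"
    and b: "\<And>n. n \<ge> 1 \<Longrightarrow> c ^ n = b n + (\<Sum>i = 1..n div 2. b i * c ^ (n - 2 * i))"
  shows "n \<ge> 1 \<Longrightarrow> a n = b n"
proof (induction n rule: less_induct)
  case (less n)
  have "(\<Sum>i = 1..n div 2. a i * c ^ (n - 2 * i)) = (\<Sum>i = 1..n div 2. b i * c ^ (n - 2 * i))"
    using less by (intro sum.cong) auto
  then show ?case using a[OF less.prems] b[OF less.prems] by simp
qed

lemma card_prime_pals_eq_card_unbordered: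
  assumes "finite A" "n \<ge> 1"
  shows "card {w \<in> words A (2 * n). prime_pal w} = card {w \<in> words A n. unbordered w}"
  using card_even_palindromes_prime_sandwiches[OF assms(1)] card_words_unbordered_sandwiches[OF assms(1)]
    assms(2)
  by (rule sandwich_recurrence_unique)

lemma card_palstars_unbordered_recurrence:
  assumes "finite A" "n \<ge> 1"
  shows "card {w \<in> words A (2 * n). palstar w}
    = (\<Sum>i = 1..n. card {w \<in> words A i. unbordered w} * card {w \<in> words A (2 * (n - i)). palstar w})"
  unfolding card_palstars_prime_factorizations[OF assms]
  using card_prime_pals_eq_card_unbordered[OF assms(1)] by (intro sum.cong) auto

unbundle fps_syntax

lemma fps_eq_one_div_two_minus:
  fixes p u :: "nat \<Rightarrow> 'a::field"
  assumes "p 0 = 1" "u 0 = 1" "\<And>n. n \<ge> 1 \<Longrightarrow> p n = (\<Sum>i = 1..n. u i * p (n - i))"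
  shows "Abs_fps p = 1 / (2 - Abs_fps u)"
proof -
  let ?P = "Abs_fps p" and ?U = "Abs_fps u"
  have "((?U - 1) * ?P) $ n = (\<Sum>i = 1..n. u i * p (n - i))" for n
    by (simp add: fps_mult_nth sum.atLeast_Suc_atMost assms(2))
  then have P: "?P = 1 + (?U - 1) * ?P"
    by (intro fps_ext) (auto simp: assms(1,3) Suc_le_eq)
  have "(2 - ?U) * ?P = ?P - (?U - 1) * ?P"
    by (simp add: algebra_simps)
  also have "\<dots> = 1"
    using P by (simp add: diff_eq_eq)
  finally have "(2 - ?U) * ?P = 1" .
  moreover have "(2 - ?U) $ 0 \<noteq> 0"
    by (simp add: assms(2))
  ultimately show ?thesis
    by (simp add: fps_divide_unit fps_inverse_unique)
qed

theorem theorem2: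
  fixes A :: "'a set" and k :: nat
  assumes "finite A" and "card A = k" and "k \<ge> 2"
  shows "(Abs_fps (\<lambda>n. of_nat (pal_count A n)) :: rat fps)
           = 1 / (2 - Abs_fps (\<lambda>n. of_nat (unb_count A n)))"
proof -
  have pal_count: "pal_count A n = card {w \<in> words A (2 * n). palstar w}" for n
    by (simp add: pal_count_def words_def)
  have unb_count: "unb_count A n = card {w \<in> words A n. unbordered w}" for n
    by (simp add: unb_count_def words_def)
  show ?thesis
  proof (rule fps_eq_one_div_two_minus)
    show "of_nat (pal_count A n) = (\<Sum>i = 1..n. of_nat (unb_count A i) * of_nat (pal_count A (n - i)))"
      if "n \<ge> 1" for n
      unfolding pal_count unb_count card_palstars_unbordered_recurrence[OF assms(1) that]
      by simp
  qed (simp_all add: pal_count unb_count card_words_zero unbordered_Nil palstar.palstar_Nil)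
qed

end
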